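(* Let $n\in\mathbb{N}$ and let $A$ be an $n\times n$ acyclic real symmetric matrix with an eigenvalue $\lambda$ of multiplicity one. If $u\in[n]$ is an index with $\phi(A-u,\lambda)\neq 0$, then there exist a unit $\lambda$-eigenvector $\boldsymbol{\beta}$ of $A$ and a $\lambda$-eigenvector $\boldsymbol{\gamma}$ of $A$ such that for every $v\in[n]$ \[ \boldsymbol{\beta}(v)=\begin{cases} \dfrac{W(P_{u,v})\,\phi(A-P_{u,v},\lambda)}{\sqrt{\phi(A-u,\lambda)\,\phi'(A,\lambda)}} & \text{if there is a path from } u \text{ to } v \text{ in } G(A),\\ 0 & \text{otherwise},\end{cases} \qquad\text{and}\qquad |\boldsymbol{\gamma}(v)|=\sqrt{|\phi(A-v,\lambda)|}. \]
   Context: $[n]=\{1,\ldots,n\}$. For a real symmetric $n\times n$ matrix $A$, its graph $G(A)$ has vertex set $[n]$, with $u\neq v$ adjacent iff $A_{uv}\neq 0$; each edge $uv$ has weight $w(uv)=A_{uv}$ and each vertex $v$ has weight $w(v)=A_{vv}$. $A$ is called acyclic if $G(A)$ is a forest. When $u,v$ lie in the same component, $P_{u,v}$ denotes the unique path between them (a single vertex if $u=v$), and $W(P_{u,v})$ is the product of the weights of its edges (equal to $1$ if $u=v$). For an index set $U$, $A-U$ is the matrix obtained from $A$ by deleting the rows and columns indexed by $U$. $\phi(B,x)=\det(x\mathbb{I}-B)$ is the characteristic polynomial (with $\phi$ of the empty matrix equal to $1$), and $\phi'(A,\lambda)$ denotes the derivative of $x\mapsto\phi(A,x)$ evaluated at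 $x=\lambda$. *)

theory Defs
  imports "Jordan_Normal_Form.Char_Poly" "Jordan_Normal_Form.DL_Submatrix"
begin

text \<open>Indices are 0-based: [n] is rendered as {0..<n}.\<close>

definition adj :: "real mat \<Rightarrow> nat \<Rightarrow> nat \<Rightarrow> bool" where
  "adj A u v \<longleftrightarrow> u \<noteq> v \<and> A $$ (u, v) \<noteq> 0"

definition is_path :: "real mat \<Rightarrow> nat list \<Rightarrow> bool" where
  "is_path A p \<longleftrightarrow> p \<noteq> [] \<and> distinct p \<and> set p \<subseteq> {..<dim_row A} \<and>
     (\<forall>i < length p - 1. adj A (p ! i) (p ! Suc i))"

definition has_path :: "real mat \<Rightarrow> nat \<Rightarrow> nat \<Rightarrow> bool" where
  "has_path A u v \<longleftrightarrow> (\<exists>p. is_path A p \<and> hd p = u \<and> last p = v)"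

definition acyclic_mat :: "real mat \<Rightarrow> bool" where
  "acyclic_mat A \<longleftrightarrow> \<not> (\<exists>p. is_path A p \<and> length p \<ge> 3 \<and> adj A (last p) (hd p))"

text \<open>The (unique, in a forest) path P_{u,v}.\<close>
definition upath :: "real mat \<Rightarrow> nat \<Rightarrow> nat \<Rightarrow> nat list" where
  "upath A u v = (THE p. is_path A p \<and> hd p = u \<and> last p = v)"

definition path_weight :: "real mat \<Rightarrow> nat list \<Rightarrow> real" where
  "path_weight A p = (\<Prod>i < length p - 1. A $$ (p ! i, p ! Suc i))"

definition del_mat :: "real mat \<Rightarrow> nat set \<Rightarrow> real mat" where
  "del_mat A U = submatrix A (- U) (- U)"

text \<open>phi(B, x) = det(x I - B); phi of the empty matrix is 1.\<close>
definition phi :: "real mat \<Rightarrow> real \<Rightarrow> real" where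
  "phi B x = poly (char_poly B) x"

definition phi' :: "real mat \<Rightarrow> real \<Rightarrow> real" where
  "phi' B x = poly (pderiv (char_poly B)) x"

end

theory Submission
  imports Defs "HOL-Combinatorics.Orbits"
begin

text \<open>Write \<open>\<Phi>(T) = \<phi>(A - T, \<lambda>)\<close>. Since G(A) is a forest, a permutation contributing to
  det(\<lambda>I - A) on an index set consists of fixed points and transpositions along edges, which gives
  Schwenk's expansion \<open>\<Phi>(T) = (\<lambda> - a\<^sub>w\<^sub>w) \<Phi>(T \<union> {w}) - \<Sum>\<^sub>z a\<^sub>w\<^sub>z a\<^sub>z\<^sub>w \<Phi>(T \<union> {w,z})\<close>.
  Applied at the end w of the path P from u to w, with T the rest of P, it shows that
  \<open>g\<^sub>u(w) = W(P\<^sub>u\<^sub>,\<^sub>w) \<Phi>(P\<^sub>u\<^sub>,\<^sub>w)\<close> satisfies \<open>(A g\<^sub>u)(w) = \<lambda> g\<^sub>u(w)\<close>: besides w itself only the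
  predecessor of w on the path and the neighbours of w off the path contribute.
  As \<open>\<Phi>({u}) \<noteq> 0\<close>, the matrix \<open>\<lambda>I - A\<close> with column u replaced by a unit vector is invertible, so
  the eigenspace is spanned by \<open>g\<^sub>u\<close>. Comparing \<open>g\<^sub>v\<close> with \<open>g\<^sub>u\<close>, using \<open>g\<^sub>v(u) = g\<^sub>u(v)\<close> and
  \<open>g\<^sub>v(v) = \<Phi>({v})\<close>, gives \<open>g\<^sub>u(v)\<^sup>2 = \<Phi>({u}) \<Phi>({v})\<close>; summing over v with
  \<open>\<phi>'(A,\<lambda>) = \<Sigma>\<^sub>v \<Phi>({v})\<close> yields \<open>\<parallel>g\<^sub>u\<parallel>\<^sup>2 = \<Phi>({u}) \<phi>'(A,\<lambda>)\<close>.\<close>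

section \<open>Determinants on index sets\<close>

text \<open>The Leibniz determinant of the principal submatrix on the index set \<open>S\<close>; indexing by a set
  avoids renumbering rows and columns when some of them are deleted.\<close>

definition det_on :: "(nat \<Rightarrow> nat \<Rightarrow> 'a::comm_ring_1) \<Rightarrow> nat set \<Rightarrow> 'a" where
  "det_on g S = (\<Sum>p\<in>{p. p permutes S}. of_int (sign p) * (\<Prod>i\<in>S. g i (p i)))"

lemma det_on_cong:
  assumes "\<And>i j. i \<in> S \<Longrightarrow> j \<in> S \<Longrightarrow> g i j = g' i j"
  shows "det_on g S = det_on g' S"
  unfolding det_on_def
proof (rule sum.cong[OF refl])
  fix p assume "p \<in> {p. p permutes S}"
  then have "(\<Prod>i\<in>S. g i (p i)) = (\<Prod>i\<in>S. g' i (p i))"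
    using assms permutes_in_image[of p S] by (intro prod.cong) auto
  then show "of_int (sign p) * (\<Prod>i\<in>S. g i (p i)) = of_int (sign p) * (\<Prod>i\<in>S. g' i (p i))"
    by simp
qed

lemma det_on_reindex:
  assumes h: "bij_betw h T S" and T: "finite T"
  shows "det_on (\<lambda>i j. g (h i) (h j)) T = det_on g S"
proof -
  let ?m = "map_permutation T h"
  have inj: "inj_on h T" using h by (rule bij_betw_imp_inj_on)
  have "?m = (\<lambda>p x. if x \<in> S then h (p (inv_into T h x)) else x)"
    unfolding map_permutation_def restrict_id_def bij_betw_imp_surj_on[OF h] by (simp add: fun_eq_iff)
  then have bij: "bij_betw ?m {p. p permutes T} {q. q permutes S}"
    using bij_betw_permutations[OF h] by simp
  have "det_on g S = (\<Sum>p\<in>{p. p permutes T}. of_int (sign (?m p)) * (\<Prod>k\<in>S. g k (?m p k)))"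
    unfolding det_on_def by (rule sum.reindex_bij_betw[OF bij, symmetric])
  also have "\<dots> = det_on (\<lambda>i j. g (h i) (h j)) T"
    unfolding det_on_def
  proof (rule sum.cong[OF refl])
    fix p assume "p \<in> {p. p permutes T}"
    then have p: "p permutes T" by simp
    have "(\<Prod>k\<in>S. g k (?m p k)) = (\<Prod>i\<in>T. g (h i) (?m p (h i)))"
      by (rule prod.reindex_bij_betw[OF h, symmetric])
    also have "\<dots> = (\<Prod>i\<in>T. g (h i) (h (p i)))"
      using map_permutation_apply[OF inj] by (intro prod.cong) auto
    finally show "of_int (sign (?m p)) * (\<Prod>k\<in>S. g k (?m p k)) =
        of_int (sign p) * (\<Prod>i\<in>T. g (h i) (h (p i)))"
      using sign_map_permutation[OF inj p T] by simp
  qed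
  finally show ?thesis by simp
qed

lemma det_eq_det_on:
  assumes "C \<in> carrier_mat m m"
  shows "det C = det_on (\<lambda>i j. C $$ (i, j)) {0..<m}"
  unfolding det_def'[OF assms] det_on_def by simp

lemma poly_det_on: "poly (det_on G S) x = det_on (\<lambda>i j. poly (G i j) x) S"
  unfolding det_on_def by (simp add: poly_sum poly_prod)

lemma permutes_fixing_eq:
  assumes "w \<in> S"
  shows "{p. p permutes S \<and> p w = w} = {p. p permutes (S - {w})}"
proof -
  have "p permutes (S - {w})" if "p permutes S" "p w = w" for p
    using that by (intro permutes_superset[OF that(1)]) auto
  moreover have "p permutes S \<and> p w = w" if p: "p permutes (S - {w})" for p
    using permutes_subset[OF p] permutes_not_in[OF p] by blast
  ultimately show ?thesis by blast
qed

lemma sum_permutes_fixing: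
  assumes fin: "finite S" and w: "w \<in> S"
  shows "(\<Sum>p\<in>{p. p permutes S \<and> p w = w}. of_int (sign p) * (\<Prod>i\<in>S. g i (p i))) =
    g w w * det_on g (S - {w})"
proof -
  have "(\<Sum>p\<in>{p. p permutes S \<and> p w = w}. of_int (sign p) * (\<Prod>i\<in>S. g i (p i))) =
      (\<Sum>p\<in>{p. p permutes (S - {w})}. g w w * (of_int (sign p) * (\<Prod>i\<in>S - {w}. g i (p i))))"
    unfolding permutes_fixing_eq[OF w]
  proof (rule sum.cong[OF refl])
    fix p assume "p \<in> {p. p permutes (S - {w})}"
    then have "p w = w" using permutes_not_in by fastforce
    then show "of_int (sign p) * (\<Prod>i\<in>S. g i (p i)) =
        g w w * (of_int (sign p) * (\<Prod>i\<in>S - {w}. g i (p i)))"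
      using prod.remove[OF fin w, of "\<lambda>i. g i (p i)"] by simp
  qed
  then show ?thesis unfolding det_on_def by (simp add: sum_distrib_left)
qed

lemma leibniz_term_transpose_comp:
  assumes fin: "finite S" and w: "w \<in> S" and z: "z \<in> S" and wz: "w \<noteq> z"
    and q: "q permutes (S - {w} - {z})"
  defines "t \<equiv> Transposition.transpose w z"
  shows "of_int (sign (t \<circ> q)) * (\<Prod>i\<in>S. g i ((t \<circ> q) i)) =
    - (g w z * g z w) * (of_int (sign q) * (\<Prod>i\<in>S - {w} - {z}. g i (q i)))"
proof -
  have qwz: "q w = w" "q z = z" using permutes_not_in[OF q] by auto
  have "sign (t \<circ> q) = sign t * sign q" unfolding t_def
    by (rule sign_compose[OF permutation_swap_id permutes_imp_permutation[OF _ q]]) (use fin in simp)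
  then have sgn: "sign (t \<circ> q) = - sign q" using wz unfolding t_def by (simp add: sign_swap_id)
  have "(\<Prod>i\<in>S. g i ((t \<circ> q) i)) = g w z * (\<Prod>i\<in>S - {w}. g i ((t \<circ> q) i))"
    using prod.remove[OF fin w, of "\<lambda>i. g i ((t \<circ> q) i)"] qwz unfolding t_def by simp
  also have "(\<Prod>i\<in>S - {w}. g i ((t \<circ> q) i)) = g z w * (\<Prod>i\<in>S - {w} - {z}. g i ((t \<circ> q) i))"
    using prod.remove[of "S - {w}" z "\<lambda>i. g i ((t \<circ> q) i)"] fin z wz qwz unfolding t_def by simp
  also have "(\<Prod>i\<in>S - {w} - {z}. g i ((t \<circ> q) i)) = (\<Prod>i\<in>S - {w} - {z}. g i (q i))"
  proof (rule prod.cong[OF refl])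
    fix i assume "i \<in> S - {w} - {z}"
    then have "q i \<in> S - {w} - {z}" using permutes_in_image[OF q] by simp
    then show "g i ((t \<circ> q) i) = g i (q i)" unfolding t_def by auto
  qed
  finally show ?thesis using sgn by (simp add: mult_ac)
qed

lemma sum_permutes_swapping:
  assumes fin: "finite S" and w: "w \<in> S" and z: "z \<in> S" and wz: "w \<noteq> z"
  shows "(\<Sum>p\<in>{p. p permutes S \<and> p w = z \<and> p z = w}. of_int (sign p) * (\<Prod>i\<in>S. g i (p i))) =
    - (g w z * g z w * det_on g (S - {w} - {z}))"
proof -
  let ?t = "Transposition.transpose w z"
  let ?F = "\<lambda>p. of_int (sign p) * (\<Prod>i\<in>S. g i (p i))"
  let ?R = "{q. q permutes (S - {w} - {z})}"
  have "sum ?F {p. p permutes S \<and> p w = z \<and> p z = w} = sum (\<lambda>q. ?F (?t \<circ> q)) ?R"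
  proof (rule sum.reindex_bij_witness[where i = "\<lambda>q. ?t \<circ> q" and j = "\<lambda>p. ?t \<circ> p"])
    fix p assume "p \<in> {p. p permutes S \<and> p w = z \<and> p z = w}"
    then have p: "p permutes S" "p w = z" "p z = w" by auto
    have tp: "(?t \<circ> p) permutes S" using permutes_compose[OF p(1) permutes_swap_id[OF w z]] .
    moreover have "(?t \<circ> p) w = w" "(?t \<circ> p) z = z" using p(2,3) by auto
    ultimately show "?t \<circ> p \<in> ?R" by (auto intro: permutes_superset[OF tp])
  next
    fix q assume "q \<in> ?R"
    then have q: "q permutes (S - {w} - {z})" by simp
    have "q w = w" "q z = z" using permutes_not_in[OF q] by auto
    moreover have "(?t \<circ> q) permutes S"
      using permutes_compose[OF permutes_subset[OF q] permutes_swap_id[OF w z]] by blast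
    ultimately show "?t \<circ> q \<in> {p. p permutes S \<and> p w = z \<and> p z = w}" by simp
  qed (simp_all add: o_assoc)
  also have "\<dots> = (\<Sum>q\<in>?R. - (g w z * g z w) * (of_int (sign q) * (\<Prod>i\<in>S - {w} - {z}. g i (q i))))"
    by (rule sum.cong[OF refl], rule leibniz_term_transpose_comp[OF fin w z wz]) simp
  also have "\<dots> = - (g w z * g z w * det_on g (S - {w} - {z}))"
    unfolding det_on_def by (simp add: sum_distrib_left sum_negf)
  finally show ?thesis .
qed

lemma det_on_zero_column:
  assumes fin: "finite S" and u: "u \<in> S" and zero: "\<And>i. i \<in> S \<Longrightarrow> i \<noteq> u \<Longrightarrow> g i u = 0"
  shows "det_on g S = g u u * det_on g (S - {u})"
proof -
  let ?F = "\<lambda>p. of_int (sign p) * (\<Prod>i\<in>S. g i (p i))"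
  have "det_on g S = sum ?F {p. p permutes S \<and> p u = u}"
    unfolding det_on_def
  proof (rule sum.mono_neutral_right)
    show "finite {p. p permutes S}" using finite_permutations[OF fin] .
    show "\<forall>p\<in>{p. p permutes S} - {p. p permutes S \<and> p u = u}. ?F p = 0"
    proof
      fix p assume "p \<in> {p. p permutes S} - {p. p permutes S \<and> p u = u}"
      then have p: "p permutes S" and pu: "p u \<noteq> u" by auto
      have "u \<in> p ` S" using permutes_image[OF p] u by simp
      then obtain i where i: "i \<in> S" "p i = u" by blast
      have "i \<noteq> u" using i pu by auto
      then have "g i (p i) = 0" using zero i by simp
      then have "(\<Prod>i\<in>S. g i (p i)) = 0" using i fin by (intro prod_zero) auto
      then show "?F p = 0" by simp
    qed
  qed blast
  also have "\<dots> = g u u * det_on g (S - {u})" by (rule sum_permutes_fixing[OF fin u])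
  finally show ?thesis .
qed

section \<open>Characteristic polynomials of principal submatrices\<close>

definition char_mat_entry :: "'a::comm_ring_1 mat \<Rightarrow> 'a \<Rightarrow> nat \<Rightarrow> nat \<Rightarrow> 'a" where
  "char_mat_entry A x i j = (if i = j then x else 0) - A $$ (i, j)"

lemma poly_char_poly_eq_det_on:
  assumes C: "C \<in> carrier_mat m m" and h: "bij_betw h {0..<m} S"
    and C_A: "\<And>i j. i < m \<Longrightarrow> j < m \<Longrightarrow> C $$ (i, j) = A $$ (h i, h j)"
  shows "poly (char_poly C) x = det_on (char_mat_entry A x) S"
proof -
  have inj: "inj_on h {0..<m}" using h by (rule bij_betw_imp_inj_on)
  have "poly (char_poly C) x = det_on (\<lambda>i j. poly (char_poly_matrix C $$ (i, j)) x) {0..<m}"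
    unfolding char_poly_def det_eq_det_on[OF char_poly_matrix_closed[OF C]] poly_det_on ..
  also have "\<dots> = det_on (\<lambda>i j. char_mat_entry A x (h i) (h j)) {0..<m}"
  proof (rule det_on_cong)
    fix i j assume ij: "i \<in> {0..<m}" "j \<in> {0..<m}"
    then have "h i = h j \<longleftrightarrow> i = j" using inj_on_eq_iff[OF inj] by blast
    then show "poly (char_poly_matrix C $$ (i, j)) x = char_mat_entry A x (h i) (h j)"
      using ij C C_A[of i j] by (simp add: char_poly_matrix_def char_mat_entry_def)
  qed
  also have "\<dots> = det_on (char_mat_entry A x) S" by (rule det_on_reindex[OF h]) simp
  finally show ?thesis .
qed

lemma bij_betw_pick_Compl:
  assumes "finite U"
  shows "bij_betw (pick (-U)) {0..<card {i. i < n \<and> i \<in> -U}} ({0..<n} - U)"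
proof -
  let ?m = "card {i. i < n \<and> i \<in> -U}"
  have inf: "infinite (-U)" using assms by (simp add: Compl_eq_Diff_UNIV infinite_UNIV_nat)
  have inj: "inj_on (pick (-U)) {0..<?m}"
    by (rule inj_onI) (metis inf nat_neq_iff pick_mono_inf)
  have sub: "pick (-U) ` {0..<?m} \<subseteq> {0..<n} - U"
    using pick_in_set_inf[OF inf] pick_le by auto
  have "{i. i < n \<and> i \<in> -U} = {0..<n} - U" by auto
  then have "card (pick (-U) ` {0..<?m}) = card ({0..<n} - U)"
    using card_image[OF inj] by simp
  then have "pick (-U) ` {0..<?m} = {0..<n} - U"
    using sub by (intro card_subset_eq) auto
  then show ?thesis using inj by (auto simp: bij_betw_def)
qed

lemma phi_del_mat_eq_det_on:
  assumes A: "A \<in> carrier_mat n n" and U: "finite U"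
  shows "phi (del_mat A U) x = det_on (char_mat_entry A x) ({0..<n} - U)"
  unfolding phi_def del_mat_def
proof (rule poly_char_poly_eq_det_on[OF _ bij_betw_pick_Compl[OF U]])
  have "dim_row A = n" "dim_col A = n" using A by auto
  then show "submatrix A (-U) (-U) \<in> carrier_mat (card {i. i < n \<and> i \<in> -U}) (card {i. i < n \<and> i \<in> -U})"
    by (intro carrier_matI) (simp_all only: dim_submatrix)
  fix i j assume "i < card {i. i < n \<and> i \<in> -U}" "j < card {i. i < n \<and> i \<in> -U}"
  then show "submatrix A (-U) (-U) $$ (i, j) = A $$ (pick (-U) i, pick (-U) j)"
    using A by (intro submatrix_index) auto
qed

lemma poly_char_poly_eq_det_on_all:
  assumes "A \<in> carrier_mat n n"
  shows "poly (char_poly A) x = det_on (char_mat_entry A x) {0..<n}"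
  by (rule poly_char_poly_eq_det_on[OF assms, where h = id]) simp_all

lemma phi'_eq_sum_det_on:
  assumes A: "A \<in> carrier_mat n n"
  shows "phi' A x = (\<Sum>v<n. det_on (char_mat_entry A x) ({0..<n} - {v}))"
  unfolding phi'_def pderiv_char_poly[OF A] poly_sum
proof (rule sum.cong[OF refl])
  fix v assume "v \<in> {..<n}"
  then have v: "v < Suc (n - 1)" and n: "Suc (n - 1) = n" by auto
  have "bij_betw (insert_index v) {0..<n - 1} ({0..<n} - {v})"
    using insert_index_inj_on insert_index_image[OF v] unfolding n by (simp add: bij_betw_def)
  then show "poly (char_poly (mat_delete A v v)) x = det_on (char_mat_entry A x) ({0..<n} - {v})"
  proof (rule poly_char_poly_eq_det_on[OF mat_delete_carrier[OF A]])
    fix i j assume "i < n - 1" "j < n - 1"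
    then show "mat_delete A v v $$ (i, j) = A $$ (insert_index v i, insert_index v j)"
      using A by (simp add: mat_delete_def insert_index_def)
  qed
qed

section \<open>Paths in a forest\<close>

lemma successively_take: "successively P xs \<Longrightarrow> successively P (take k xs)"
  using successively_append_iff[of P "take k xs" "drop k xs"] by simp

lemma path_weight_snoc:
  assumes "P \<noteq> []"
  shows "path_weight A (P @ [w]) = path_weight A P * A $$ (last P, w)"
proof -
  define m where "m = length P - 1"
  have lm: "length P = Suc m" using assms unfolding m_def by simp
  have "path_weight A (P @ [w]) =
      (\<Prod>i<m. A $$ ((P @ [w]) ! i, (P @ [w]) ! Suc i)) * A $$ ((P @ [w]) ! m, (P @ [w]) ! Suc m)"
    unfolding path_weight_def using lm by simp
  also have "(\<Prod>i<m. A $$ ((P @ [w]) ! i, (P @ [w]) ! Suc i)) = path_weight A P"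
    unfolding path_weight_def m_def[symmetric] using lm by (intro prod.cong) (auto simp: nth_append)
  finally show ?thesis using lm assms by (simp add: nth_append last_conv_nth)
qed

lemma first_common_element:
  assumes q: "distinct q" and x: "x \<in> set p" "x \<in> set q"
  obtains i j where "i < length p" "j < length q" "p ! i = q ! j"
    "set (take (Suc i) p) \<inter> set (take j q) = {}"
proof -
  have ex: "\<exists>i. i < length p \<and> p ! i \<in> set q" using x by (metis in_set_conv_nth)
  define i where "i = (LEAST i. i < length p \<and> p ! i \<in> set q)"
  have i: "i < length p" "p ! i \<in> set q" using LeastI_ex[OF ex] unfolding i_def by auto
  have before: "p ! i' \<notin> set q" if "i' < i" for i'
    using not_less_Least[of i' "\<lambda>i. i < length p \<and> p ! i \<in> set q"] that i(1)
    unfolding i_def by auto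
  obtain j where j: "j < length q" "q ! j = p ! i" using i(2) by (auto simp: in_set_conv_nth)
  have "set (take (Suc i) p) \<inter> set (take j q) = {}"
  proof (rule ccontr)
    assume "set (take (Suc i) p) \<inter> set (take j q) \<noteq> {}"
    then obtain y where y: "y \<in> set (take (Suc i) p)" "y \<in> set (take j q)" by blast
    from y(1) obtain i' where i': "i' < Suc i" "y = p ! i'"
      using i(1) by (auto simp: in_set_conv_nth)
    have "y \<in> set q" using y(2) set_take_subset by fastforce
    then have "i' = i" using before i' by (metis less_SucE)
    then have "y = q ! j" using i'(2) j(2) by simp
    moreover from y(2) obtain j' where "j' < j" "y = q ! j'"
      using j(1) by (auto simp: in_set_conv_nth)
    ultimately show False using nth_eq_iff_index_eq[OF q] j(1) by fastforce
  qed
  then show ?thesis using that i(1) j by metis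
qed

locale forest =
  fixes A :: "real mat" and n :: nat
  assumes carrier: "A \<in> carrier_mat n n"
    and symmetric: "\<forall>i<n. \<forall>j<n. A $$ (i, j) = A $$ (j, i)"
    and acyclic: "acyclic_mat A"
begin

lemma dim_A: "dim_row A = n" "dim_col A = n"
  using carrier by auto

lemma adj_commute: "x < n \<Longrightarrow> y < n \<Longrightarrow> adj A x y \<longleftrightarrow> adj A y x"
  using symmetric unfolding adj_def by auto

lemma is_path_iff:
  "is_path A p \<longleftrightarrow> p \<noteq> [] \<and> distinct p \<and> set p \<subseteq> {..<n} \<and> successively (adj A) p"
proof -
  have "(\<forall>i < length p - 1. adj A (p ! i) (p ! Suc i)) \<longleftrightarrow>
      (\<forall>i. Suc i < length p \<longrightarrow> adj A (p ! i) (p ! Suc i))"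
    by (simp add: less_diff_conv)
  then show ?thesis unfolding is_path_def successively_conv_nth dim_A by simp
qed

lemma is_path_Cons:
  "p \<noteq> [] \<Longrightarrow> is_path A (a # p) \<longleftrightarrow> a < n \<and> a \<notin> set p \<and> adj A a (hd p) \<and> is_path A p"
  unfolding is_path_iff by (cases p) auto

lemma is_path_rev:
  assumes "is_path A p"
  shows "is_path A (rev p)"
proof -
  have p: "set p \<subseteq> {..<n}" "successively (adj A) p" using assms unfolding is_path_iff by auto
  have "successively (\<lambda>x y. adj A y x) p"
    by (rule successively_mono[OF p(2)]) (use p(1) adj_commute in blast)
  then show ?thesis using assms unfolding is_path_iff by simp
qed

lemma is_path_take:
  assumes "is_path A p"
  shows "is_path A (take (Suc k) p)"
proof -
  have p: "p \<noteq> []" "distinct p" "set p \<subseteq> {..<n}" "successively (adj A) p"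
    using assms unfolding is_path_iff by auto
  have "take (Suc k) p \<noteq> []" using p(1) by simp
  moreover have "distinct (take (Suc k) p)" using p(2) by (rule distinct_take)
  moreover have "set (take (Suc k) p) \<subseteq> {..<n}" by (rule subset_trans[OF set_take_subset p(3)])
  moreover have "successively (adj A) (take (Suc k) p)" using p(4) by (rule successively_take)
  ultimately show ?thesis unfolding is_path_iff by (intro conjI)
qed

lemma is_path_snoc:
  "is_path A p \<Longrightarrow> z < n \<Longrightarrow> z \<notin> set p \<Longrightarrow> adj A (last p) z \<Longrightarrow> is_path A (p @ [z])"
  unfolding is_path_iff by (auto simp: successively_append_iff)

lemma is_path_join:
  assumes X: "is_path A X" and Z: "is_path A Z"
    and last_hd: "last X = hd Z" and disj: "set X \<inter> set (tl Z) = {}"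
  shows "is_path A (X @ tl Z)"
proof (cases "tl Z")
  case Nil
  then show ?thesis using X by simp
next
  case (Cons z Z')
  then obtain z0 where Z_eq: "Z = z0 # z # Z'" by (cases Z) auto
  show ?thesis using X Z last_hd disj unfolding Z_eq is_path_iff by (auto simp: successively_append_iff)
qed

lemma no_cycle: "is_path A C \<Longrightarrow> 3 \<le> length C \<Longrightarrow> \<not> adj A (last C) (hd C)"
  using acyclic unfolding acyclic_mat_def by blast

lemma no_fork:
  assumes pa: "is_path A (a # p)" and qa: "is_path A (a # q)" and ne: "p \<noteq> []" "q \<noteq> []"
    and last_eq: "last p = last q" and hd_neq: "hd p \<noteq> hd q"
  shows False
proof -
  have p: "a < n" "a \<notin> set p" "adj A a (hd p)" "is_path A p" using pa ne(1) is_path_Cons by auto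
  have q: "a \<notin> set q" "adj A a (hd q)" "is_path A q" using qa ne(2) is_path_Cons by auto
  have dq: "distinct q" using q(3) unfolding is_path_iff by simp
  have x: "last p \<in> set q" using last_eq last_in_set[OF ne(2)] by simp
  obtain i j where ij: "i < length p" "j < length q" "p ! i = q ! j"
    and disj: "set (take (Suc i) p) \<inter> set (take j q) = {}"
    by (rule first_common_element[OF dq last_in_set[OF ne(1)] x])
  define X where "X = take (Suc i) p"
  define Z where "Z = rev (take (Suc j) q)"
  have Z_eq: "Z = q ! j # rev (take j q)" unfolding Z_def using ij(2) by (simp add: take_Suc_conv_app_nth)
  have X_ne: "X \<noteq> []" and last_X: "last X = p ! i"
    unfolding X_def using ij(1) by (auto simp: take_Suc_conv_app_nth)
  have Z: "is_path A Z" unfolding Z_def by (rule is_path_rev[OF is_path_take[OF q(3)]])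
  have "is_path A (X @ tl Z)"
    by (rule is_path_join[OF is_path_take[OF p(4), of i, folded X_def] Z])
      (use disj last_X ij(3) in \<open>simp_all add: X_def Z_eq\<close>)
  moreover have "a \<notin> set (X @ tl Z)"
    using p(2) q(1) set_take_subset unfolding X_def Z_eq by fastforce
  moreover have "hd (X @ tl Z) = hd p" using X_ne ne(1) unfolding X_def by simp
  ultimately have C: "is_path A (a # X @ tl Z)" using p(1,3) X_ne is_path_Cons by simp
  have "i \<noteq> 0 \<or> j \<noteq> 0" using ij(3) hd_neq hd_conv_nth[OF ne(1)] hd_conv_nth[OF ne(2)] by (cases i; cases j) auto
  then have "3 \<le> length (a # X @ tl Z)" unfolding X_def Z_eq using ij(1,2) by auto
  moreover have "last (a # X @ tl Z) = hd q"
    using ij X_ne last_X ne(2) unfolding Z_eq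
    by (cases j) (auto simp: hd_conv_nth last_rev take_Suc_conv_app_nth)
  ultimately show False using no_cycle[OF C] q(2) p(1) ne(2) adj_commute hd_in_set q(3)
    unfolding is_path_iff by (auto simp: subset_iff)
qed

lemma is_path_unique:
  "is_path A p \<Longrightarrow> is_path A q \<Longrightarrow> hd p = hd q \<Longrightarrow> last p = last q \<Longrightarrow> p = q"
proof (induction p arbitrary: q)
  case Nil
  then show ?case by (simp add: is_path_def)
next
  case (Cons a p q)
  obtain q' where q: "q = a # q'"
    using Cons.prems(2,3) unfolding is_path_def by (cases q) auto
  have a_p: "a \<notin> set p" and a_q': "a \<notin> set q'"
    using Cons.prems(1,2) unfolding q is_path_def by auto
  show ?case
  proof (cases "p = [] \<or> q' = []")
    case True
    then have "p = [] \<and> q' = []"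
      using Cons.prems(4) a_p a_q' last_in_set unfolding q by (metis last_ConsL last_ConsR)
    then show ?thesis unfolding q by simp
  next
    case False
    then have "is_path A p" "is_path A q'" "last p = last q'"
      using Cons.prems is_path_Cons unfolding q by auto
    then show ?thesis
      using Cons.IH[of q'] no_fork[OF Cons.prems(1)] Cons.prems(2) False unfolding q by blast
  qed
qed

lemma upath_of_is_path: "is_path A p \<Longrightarrow> upath A (hd p) (last p) = p"
  unfolding upath_def by (rule the_equality) (use is_path_unique in auto)

lemma has_path_upath:
  assumes "has_path A r v"
  shows "is_path A (upath A r v)" "hd (upath A r v) = r" "last (upath A r v) = v"
  using assms upath_of_is_path unfolding has_path_def by auto

lemma has_path_lt: "has_path A r v \<Longrightarrow> r < n \<and> v < n"
  unfolding has_path_def is_path_iff by (metis hd_in_set last_in_set lessThan_iff subsetD)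

lemma upath_self: "r < n \<Longrightarrow> has_path A r r \<and> upath A r r = [r]"
  using upath_of_is_path[of "[r]"] unfolding has_path_def is_path_iff by force

lemma has_path_sym:
  assumes "has_path A r v"
  shows "has_path A v r" "upath A v r = rev (upath A r v)"
proof -
  let ?P = "upath A r v"
  have P: "is_path A ?P" "hd ?P = r" "last ?P = v" using has_path_upath[OF assms] by auto
  have "?P \<noteq> []" using P(1) unfolding is_path_def by simp
  then have "hd (rev ?P) = v" "last (rev ?P) = r" using P by (auto simp: hd_rev last_rev)
  then show "has_path A v r" "upath A v r = rev ?P"
    using is_path_rev[OF P(1)] upath_of_is_path[OF is_path_rev[OF P(1)]] unfolding has_path_def
    by auto
qed

lemma path_weight_rev:
  assumes "is_path A p"
  shows "path_weight A (rev p) = path_weight A p"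
proof -
  define m where "m = length p - 1"
  have p_lt: "\<And>i. i < length p \<Longrightarrow> p ! i < n"
    using assms unfolding is_path_iff by (auto simp: subset_iff)
  have "path_weight A (rev p) = (\<Prod>i<m. A $$ (p ! (m - Suc i), p ! Suc (m - Suc i)))"
    unfolding path_weight_def m_def
  proof (rule prod.cong)
    fix i assume "i \<in> {..<length p - 1}"
    then have i: "i < length p - 1" by simp
    then have "rev p ! i = p ! Suc (length p - 1 - Suc i)" "rev p ! Suc i = p ! (length p - 1 - Suc i)"
      by (simp_all add: rev_nth Suc_diff_Suc)
    moreover have "p ! Suc (length p - 1 - Suc i) < n" "p ! (length p - 1 - Suc i) < n"
      using i p_lt by auto
    ultimately show "A $$ (rev p ! i, rev p ! Suc i) =
        A $$ (p ! (length p - 1 - Suc i), p ! Suc (length p - 1 - Suc i))"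
      using symmetric by simp
  qed simp
  also have "\<dots> = (\<Prod>i<m. A $$ (p ! i, p ! Suc i))"
    by (rule prod.nat_diff_reindex)
  finally show ?thesis unfolding path_weight_def m_def .
qed

lemma upath_snoc:
  assumes hp: "has_path A r w" and z: "z < n" "adj A w z" "z \<notin> set (upath A r w)"
  shows "has_path A r z" "upath A r z = upath A r w @ [z]"
proof -
  let ?P = "upath A r w"
  have P: "is_path A ?P" "hd ?P = r" "last ?P = w" using has_path_upath[OF hp] by auto
  have Q: "is_path A (?P @ [z])" using is_path_snoc[OF P(1) z(1) z(3)] P(3) z(2) by simp
  have "?P \<noteq> []" using P(1) unfolding is_path_def by simp
  then have "hd (?P @ [z]) = r" "last (?P @ [z]) = z" using P by auto
  then show "has_path A r z" "upath A r z = ?P @ [z]"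
    using Q upath_of_is_path[OF Q] unfolding has_path_def by auto
qed

lemma has_path_adj:
  assumes hp: "has_path A r z" and a: "adj A z w" and w: "w < n"
  shows "has_path A r w"
proof (cases "w \<in> set (upath A r z)")
  case True
  let ?P = "upath A r z"
  have P: "is_path A ?P" "hd ?P = r" using has_path_upath[OF hp] by auto
  obtain j where j: "j < length ?P" "?P ! j = w" using True by (auto simp: in_set_conv_nth)
  have "is_path A (take (Suc j) ?P)" using is_path_take[OF P(1)] .
  moreover have "last (take (Suc j) ?P) = w" using j by (simp add: take_Suc_conv_app_nth)
  ultimately show ?thesis using P(2) unfolding has_path_def by (metis hd_take zero_less_Suc)
next
  case False
  then show ?thesis using upath_snoc(1)[OF hp w a] by blast
qed

text \<open>A shortcut from an earlier vertex of the path to \<open>w\<close> would give a second, shorter path.\<close>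

lemma upath_adj_last:
  assumes Q: "is_path A (Q @ [w])" and z: "z \<in> set Q" and a: "adj A z w"
  shows "z = last Q"
proof -
  obtain j where j: "j < length Q" "Q ! j = z" using z by (auto simp: in_set_conv_nth)
  have Q': "is_path A (take (Suc j) Q)"
    using is_path_take[OF Q, of j] j(1) by simp
  have w: "w < n" "w \<notin> set (take (Suc j) Q)"
    using Q set_take_subset unfolding is_path_iff by fastforce+
  have last_Q': "last (take (Suc j) Q) = z" using j by (simp add: take_Suc_conv_app_nth)
  have "is_path A (take (Suc j) Q @ [w])" using is_path_snoc[OF Q' w] a last_Q' by simp
  moreover have "take (Suc j) Q \<noteq> []" using j(1) by (cases Q) auto
  ultimately have "take (Suc j) Q @ [w] = Q @ [w]"
    using is_path_unique Q by (metis hd_append2 hd_take last_snoc zero_less_Suc hd_append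
        length_greater_0_conv take_eq_Nil)
  then have "take (Suc j) Q = Q" by simp
  then show ?thesis using last_Q' by simp
qed

lemma upath_butlast:
  assumes hp: "has_path A r w" and wr: "w \<noteq> r"
  obtains P where "upath A r w = P @ [w]" "P \<noteq> []" "has_path A r (last P)"
    "upath A r (last P) = P" "adj A (last P) w"
proof -
  let ?Q = "upath A r w"
  have Q: "is_path A ?Q" "hd ?Q = r" "last ?Q = w" using has_path_upath[OF hp] by auto
  define P where "P = butlast ?Q"
  have Q_eq: "?Q = P @ [w]"
    unfolding P_def using append_butlast_last_id Q(1,3) unfolding is_path_def by metis
  have P_ne: "P \<noteq> []" using Q(2) Q_eq wr by auto
  have "P = take (Suc (length P - 1)) ?Q" using Q_eq P_ne by simp
  then have P: "is_path A P" using is_path_take[OF Q(1), of "length P - 1"] Q_eq by simp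
  have hd_P: "hd P = r" using Q(2) Q_eq P_ne by simp
  have "adj A (last P) w"
    using Q(1) Q_eq P_ne unfolding is_path_iff by (simp add: successively_append_iff)
  then show ?thesis
    using that[OF Q_eq P_ne] P hd_P upath_of_is_path[OF P] unfolding has_path_def by auto
qed

section \<open>Schwenk's expansion\<close>

text \<open>A nonzero term of the Leibniz expansion of \<open>xI - A\<close> moves vertices only along edges of G(A), so
  a cycle of length at least 3 of the permutation would be a cycle of the graph.\<close>

lemma permutes_along_edges_involution:
  assumes S: "S \<subseteq> {0..<n}" and p: "p permutes S"
    and edges: "\<And>i. i \<in> S \<Longrightarrow> p i \<noteq> i \<Longrightarrow> A $$ (i, p i) \<noteq> 0"
  shows "p (p w) = w"
proof (rule ccontr)
  assume np: "p (p w) \<noteq> w"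
  then have pw: "p w \<noteq> w" by auto
  have "finite S" using S finite_subset by blast
  then have perm: "permutation p" using p permutation_permutes by blast
  have w: "w \<in> S" using pw permutes_not_in[OF p] by blast
  have orb: "w \<in> orbit p w" by (rule permutation_self_in_orbit[OF perm])
  define k where "k = funpow_dist1 p w w"
  have k_w: "(p ^^ k) w = w" unfolding k_def by (rule funpow_dist1_prop[OF orb])
  have inj: "inj_on (\<lambda>j. (p ^^ j) w) {0..<k}" unfolding k_def by (rule inj_on_funpow_dist1[OF orb])
  have "k \<noteq> 1" "k \<noteq> 2" using k_w pw np by (auto simp: numeral_2_eq_2)
  then have k3: "3 \<le> k" unfolding k_def by linarith
  have step: "adj A ((p ^^ j) w) ((p ^^ Suc j) w)" for j
  proof -
    have "(p ^^ j) w \<in> S" using permutes_in_funpow_image[OF p w] .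
    moreover have "inj (p ^^ j)" using permutes_inj[OF p] by (rule inj_fn)
    then have "(p ^^ Suc j) w \<noteq> (p ^^ j) w" using pw by (simp add: funpow_swap1 inj_eq)
    ultimately show ?thesis using edges unfolding adj_def by auto
  qed
  define L where "L = map (\<lambda>j. (p ^^ j) w) [0..<k]"
  have "is_path A L"
    unfolding is_path_def
  proof (intro conjI allI impI)
    show "L \<noteq> []" "distinct L" using k3 inj unfolding L_def by (auto simp: distinct_map)
    have "set L \<subseteq> S" unfolding L_def using permutes_in_funpow_image[OF p w] by auto
    then show "set L \<subseteq> {..<dim_row A}" using S dim_A by auto
  next
    fix i assume "i < length L - 1"
    then have "i < k" "Suc i < k" unfolding L_def by auto
    then show "adj A (L ! i) (L ! Suc i)" using step[of i] unfolding L_def by simp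
  qed
  moreover have "adj A (last L) (hd L)"
    using step[of "k - 1"] k3 k_w unfolding L_def by (simp add: last_map hd_map)
  ultimately show False using no_cycle k3 unfolding L_def by simp
qed

lemma prod_char_mat_entry_eq_0:
  assumes S: "S \<subseteq> {0..<n}" and p: "p permutes S" and np: "p (p w) \<noteq> w"
  shows "(\<Prod>i\<in>S. char_mat_entry A x i (p i)) = 0"
proof (rule ccontr)
  assume nz: "(\<Prod>i\<in>S. char_mat_entry A x i (p i)) \<noteq> 0"
  have "A $$ (i, p i) \<noteq> 0" if "i \<in> S" "p i \<noteq> i" for i
  proof
    assume "A $$ (i, p i) = 0"
    then have "char_mat_entry A x i (p i) = 0" using that(2) unfolding char_mat_entry_def by simp
    then show False using nz that(1) S finite_subset by (metis finite_atLeastLessThan prod_zero)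
  qed
  then show False using permutes_along_edges_involution[OF S p] np by blast
qed

lemma sum_permutes_moving_char_mat_entry:
  fixes x :: real
  assumes S: "S \<subseteq> {0..<n}" and w: "w \<in> S" and z: "z \<in> S" and wz: "w \<noteq> z"
  defines "N \<equiv> char_mat_entry A x"
  shows "(\<Sum>p\<in>{p. p permutes S \<and> p w = z}. of_int (sign p) * (\<Prod>i\<in>S. N i (p i))) =
    - (A $$ (w, z) * A $$ (z, w) * det_on N (S - {w} - {z}))"
proof -
  have fin: "finite S" using S finite_subset by blast
  let ?F = "\<lambda>p. of_int (sign p) * (\<Prod>i\<in>S. N i (p i))"
  have "sum ?F {p. p permutes S \<and> p w = z} = sum ?F {p. p permutes S \<and> p w = z \<and> p z = w}"
  proof (rule sum.mono_neutral_right)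
    show "finite {p. p permutes S \<and> p w = z}" using finite_permutations[OF fin] by simp
    show "\<forall>p\<in>{p. p permutes S \<and> p w = z} - {p. p permutes S \<and> p w = z \<and> p z = w}. ?F p = 0"
    proof
      fix p assume "p \<in> {p. p permutes S \<and> p w = z} - {p. p permutes S \<and> p w = z \<and> p z = w}"
      then have p: "p permutes S" "p (p w) \<noteq> w" by auto
      show "?F p = 0" using prod_char_mat_entry_eq_0[OF S p] unfolding N_def by simp
    qed
  qed blast
  also have "\<dots> = - (N w z * N z w * det_on N (S - {w} - {z}))"
    by (rule sum_permutes_swapping[OF fin w z wz])
  also have "N w z * N z w = A $$ (w, z) * A $$ (z, w)"
    using wz unfolding N_def char_mat_entry_def by auto
  finally show ?thesis .
qed

lemma det_on_char_expand:
  fixes x :: real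
  assumes S: "S \<subseteq> {0..<n}" and w: "w \<in> S"
  defines "N \<equiv> char_mat_entry A x"
  shows "det_on N S = (x - A $$ (w, w)) * det_on N (S - {w})
     - (\<Sum>z\<in>S - {w}. A $$ (w, z) * A $$ (z, w) * det_on N (S - {w} - {z}))"
proof -
  have fin: "finite S" using S finite_subset by blast
  let ?F = "\<lambda>p. of_int (sign p) * (\<Prod>i\<in>S. N i (p i))"
  let ?P = "\<lambda>z. {p. p permutes S \<and> p w = z}"
  have "det_on N S = (\<Sum>z\<in>S. sum ?F {p \<in> {p. p permutes S}. p w = z})"
    unfolding det_on_def
  proof (rule sum.group[symmetric])
    show "finite {p. p permutes S}" using finite_permutations[OF fin] .
    show "(\<lambda>p. p w) ` {p. p permutes S} \<subseteq> S" using permutes_in_image w by fastforce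
  qed (rule fin)
  also have "\<dots> = (\<Sum>z\<in>S. sum ?F (?P z))" by simp
  also have "\<dots> = sum ?F (?P w) + (\<Sum>z\<in>S - {w}. sum ?F (?P z))"
    by (rule sum.remove[OF fin w])
  also have "sum ?F (?P w) = N w w * det_on N (S - {w})" by (rule sum_permutes_fixing[OF fin w])
  also have "N w w = x - A $$ (w, w)" unfolding N_def char_mat_entry_def by simp
  also have "(\<Sum>z\<in>S - {w}. sum ?F (?P z)) =
      (\<Sum>z\<in>S - {w}. - (A $$ (w, z) * A $$ (z, w) * det_on N (S - {w} - {z})))"
    by (rule sum.cong[OF refl]) (use S w in \<open>simp add: sum_permutes_moving_char_mat_entry N_def\<close>)
  finally show ?thesis by (simp add: sum_negf)
qed

definition char_minor :: "real \<Rightarrow> nat set \<Rightarrow> real" where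
  "char_minor x T = det_on (char_mat_entry A x) ({0..<n} - T)"

lemma char_minor_expand:
  assumes "w < n" "w \<notin> T"
  shows "char_minor x T = (x - A $$ (w, w)) * char_minor x (insert w T)
     - (\<Sum>z\<in>{0..<n} - insert w T. A $$ (w, z) * A $$ (z, w) * char_minor x (insert z (insert w T)))"
proof -
  have "{0..<n} - insert w T = {0..<n} - T - {w}"
    "\<And>z. {0..<n} - insert z (insert w T) = {0..<n} - T - {w} - {z}" by auto
  then show ?thesis unfolding char_minor_def using det_on_char_expand[of "{0..<n} - T" w x] assms by simp
qed

lemma phi_del_mat_eq_char_minor: "finite T \<Longrightarrow> phi (del_mat A T) x = char_minor x T"
  unfolding char_minor_def by (rule phi_del_mat_eq_det_on[OF carrier])

lemma poly_char_poly_eq_char_minor: "poly (char_poly A) x = char_minor x {}"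
  unfolding char_minor_def using poly_char_poly_eq_det_on_all[OF carrier] by simp

lemma phi'_eq_sum_char_minor: "phi' A x = (\<Sum>v<n. char_minor x {v})"
  unfolding char_minor_def by (rule phi'_eq_sum_det_on[OF carrier])

section \<open>The path vector\<close>

definition eigenfun :: "real \<Rightarrow> (nat \<Rightarrow> real) \<Rightarrow> bool" where
  "eigenfun x f \<longleftrightarrow> (\<forall>w<n. (\<Sum>z\<in>{0..<n}. A $$ (w, z) * f z) = x * f w)"

definition path_vec :: "real \<Rightarrow> nat \<Rightarrow> nat \<Rightarrow> real" where
  "path_vec x r v =
    (if has_path A r v then path_weight A (upath A r v) * char_minor x (set (upath A r v)) else 0)"

lemma path_vec_self: "r < n \<Longrightarrow> path_vec x r r = char_minor x {r}"
  using upath_self[of r] unfolding path_vec_def path_weight_def by simp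

lemma path_vec_sym: "path_vec x r v = path_vec x v r"
proof (cases "has_path A r v")
  case True
  then have "has_path A v r" "upath A v r = rev (upath A r v)" by (rule has_path_sym)+
  then show ?thesis
    using True path_weight_rev[OF has_path_upath(1)[OF True]] unfolding path_vec_def by simp
next
  case False
  then have "\<not> has_path A v r" using has_path_sym(1) by blast
  then show ?thesis using False unfolding path_vec_def by simp
qed

lemma sum_off_upath:
  assumes hp: "has_path A r w"
  defines "P \<equiv> upath A r w"
  shows "(\<Sum>z\<in>{0..<n} - set P. A $$ (w, z) * path_vec x r z) =
    path_weight A P * (\<Sum>z\<in>{0..<n} - set P. A $$ (w, z) * A $$ (z, w) * char_minor x (insert z (set P)))"
  unfolding sum_distrib_left
proof (rule sum.cong[OF refl])
  fix z assume z: "z \<in> {0..<n} - set P"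
  have P: "is_path A P" "last P = w" using has_path_upath[OF hp] unfolding P_def by auto
  then have "P \<noteq> []" "w \<in> set P" unfolding is_path_def by auto
  show "A $$ (w, z) * path_vec x r z =
      path_weight A P * (A $$ (w, z) * A $$ (z, w) * char_minor x (insert z (set P)))"
  proof (cases "adj A w z")
    case False
    then have "A $$ (w, z) = 0" using z \<open>w \<in> set P\<close> unfolding adj_def by auto
    then show ?thesis by simp
  next
    case True
    have "has_path A r z" "upath A r z = P @ [z]"
      using upath_snoc[OF hp _ True] z unfolding P_def by auto
    moreover have "path_weight A (P @ [z]) = path_weight A P * A $$ (w, z)"
      using path_weight_snoc[OF \<open>P \<noteq> []\<close>] P(2) by simp
    moreover have "z < n" "w < n" using z has_path_lt[OF hp] by auto
    then have "A $$ (z, w) = A $$ (w, z)" using symmetric by simp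
    ultimately show ?thesis unfolding path_vec_def by (simp add: power2_eq_square)
  qed
qed

lemma sum_upath_butlast:
  assumes "is_path A (P @ [w])" "P \<noteq> []"
  shows "(\<Sum>z\<in>set P. A $$ (w, z) * f z) = A $$ (w, last P) * f (last P)"
proof -
  have Pw: "w < n" "set P \<subseteq> {..<n}" "w \<notin> set P"
    using assms(1) unfolding is_path_iff by auto
  have zero: "A $$ (w, z) = 0" if z: "z \<in> set P" "z \<noteq> last P" for z
  proof (rule ccontr)
    assume "A $$ (w, z) \<noteq> 0"
    then have "adj A w z" using z(1) Pw(3) unfolding adj_def by auto
    moreover have "z < n" using z(1) Pw(2) by auto
    ultimately have "adj A z w" using adj_commute Pw(1) by blast
    then show False using upath_adj_last[OF assms(1) z(1)] z(2) by simp
  qed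
  have "(\<Sum>z\<in>set P - {last P}. A $$ (w, z) * f z) = 0" by (rule sum.neutral) (use zero in auto)
  then show ?thesis by (simp add: sum.remove[OF finite_set last_in_set[OF assms(2)]])
qed

lemma path_vec_eigen_unreachable:
  assumes w: "w < n" and no_path: "\<not> has_path A r w"
  shows "(\<Sum>z\<in>{0..<n}. A $$ (w, z) * path_vec x r z) = x * path_vec x r w"
proof -
  have zero: "A $$ (w, z) * path_vec x r z = 0" if z: "z \<in> {0..<n}" for z
  proof (cases "adj A w z")
    case True
    then have "adj A z w" using adj_commute w z by simp
    then have "\<not> has_path A r z" using has_path_adj no_path w by blast
    then show ?thesis unfolding path_vec_def by simp
  next
    case False
    then have "A $$ (w, z) = 0 \<or> z = w" unfolding adj_def by auto
    then show ?thesis using no_path unfolding path_vec_def by auto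
  qed
  have "(\<Sum>z\<in>{0..<n}. A $$ (w, z) * path_vec x r z) = 0" by (rule sum.neutral) (use zero in blast)
  then show ?thesis using no_path unfolding path_vec_def by simp
qed

lemma path_vec_eigen_root:
  assumes r: "r < n" and root: "char_minor x {} = 0"
  shows "(\<Sum>z\<in>{0..<n}. A $$ (r, z) * path_vec x r z) = x * path_vec x r r"
proof -
  have P: "has_path A r r" "upath A r r = [r]" using upath_self[OF r] by auto
  have "(\<Sum>z\<in>{0..<n}. A $$ (r, z) * path_vec x r z) =
      A $$ (r, r) * path_vec x r r + (\<Sum>z\<in>{0..<n} - {r}. A $$ (r, z) * path_vec x r z)"
    by (rule sum.remove) (use r in auto)
  also have "(\<Sum>z\<in>{0..<n} - {r}. A $$ (r, z) * path_vec x r z) =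
      (\<Sum>z\<in>{0..<n} - {r}. A $$ (r, z) * A $$ (z, r) * char_minor x (insert z {r}))"
    using sum_off_upath[OF P(1), of x] P(2) by (simp add: path_weight_def)
  also have "\<dots> = (x - A $$ (r, r)) * char_minor x {r}"
    using char_minor_expand[of r "{}" x] r root by simp
  finally show ?thesis using path_vec_self[OF r] by (simp add: algebra_simps)
qed

text \<open>Away from the root, Schwenk's expansion is applied at \<open>w\<close> to the complement of the path
  from \<open>r\<close> to the predecessor \<open>p\<close> of \<open>w\<close>; its two terms match the contributions of \<open>w\<close> and
  of the neighbours of \<open>w\<close> off the path, while \<open>p\<close> is the only neighbour of \<open>w\<close> on the path.\<close>

lemma path_vec_eigen_descendant:
  assumes hp: "has_path A r w" and wr: "w \<noteq> r"
  shows "(\<Sum>z\<in>{0..<n}. A $$ (w, z) * path_vec x r z) = x * path_vec x r w"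
proof -
  obtain P where P: "upath A r w = P @ [w]" "P \<noteq> []" "has_path A r (last P)"
    "upath A r (last P) = P"
    using upath_butlast[OF hp wr] by blast
  define p W T where "p = last P" and "W = path_weight A P" and "T = insert w (set P)"
  let ?off = "\<Sum>z\<in>{0..<n} - T. A $$ (w, z) * A $$ (z, w) * char_minor x (insert z T)"
  have path: "is_path A (P @ [w])" using has_path_upath(1)[OF hp] P(1) by simp
  then have w: "w < n" "w \<notin> set P" and T: "T \<subseteq> {0..<n}"
    unfolding is_path_iff T_def by (auto simp: subset_iff)
  have "p < n" using has_path_lt[OF P(3)] unfolding p_def by simp
  then have sym: "A $$ (w, p) = A $$ (p, w)" using symmetric w(1) by simp
  have weight: "path_weight A (upath A r w) = W * A $$ (p, w)"
    unfolding P(1) W_def p_def by (rule path_weight_snoc[OF P(2)])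
  have set_upath: "set (upath A r w) = T" unfolding T_def P(1) by simp
  have g_w: "path_vec x r w = W * A $$ (p, w) * char_minor x T"
    unfolding path_vec_def using hp set_upath weight by simp
  have g_p: "path_vec x r p = W * char_minor x (set P)"
    unfolding path_vec_def p_def W_def using P(3,4) by simp
  have "(\<Sum>z\<in>{0..<n}. A $$ (w, z) * path_vec x r z) =
      (\<Sum>z\<in>{0..<n} - T. A $$ (w, z) * path_vec x r z) + A $$ (w, w) * path_vec x r w
      + (\<Sum>z\<in>set P. A $$ (w, z) * path_vec x r z)"
    using sum.subset_diff[OF T finite_atLeastLessThan, of "\<lambda>z. A $$ (w, z) * path_vec x r z"] w(2)
    unfolding T_def by (simp add: add.assoc)
  also have "(\<Sum>z\<in>{0..<n} - T. A $$ (w, z) * path_vec x r z) = W * A $$ (p, w) * ?off"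
    using sum_off_upath[OF hp, of x] unfolding set_upath weight by simp
  also have "(\<Sum>z\<in>set P. A $$ (w, z) * path_vec x r z) = A $$ (w, p) * path_vec x r p"
    unfolding p_def by (rule sum_upath_butlast[OF path P(2)])
  finally have sum_eq: "(\<Sum>z\<in>{0..<n}. A $$ (w, z) * path_vec x r z) =
      W * A $$ (p, w) * ?off + A $$ (w, w) * path_vec x r w + A $$ (w, p) * path_vec x r p" .
  have expand: "char_minor x (set P) + A $$ (w, w) * char_minor x T + ?off = x * char_minor x T"
    using char_minor_expand[OF w] unfolding T_def by (simp add: algebra_simps)
  have "W * A $$ (p, w) * ?off + A $$ (w, w) * (W * A $$ (p, w) * char_minor x T)
      + A $$ (p, w) * (W * char_minor x (set P)) =
      W * A $$ (p, w) * (char_minor x (set P) + A $$ (w, w) * char_minor x T + ?off)"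
    by (simp add: algebra_simps)
  then show ?thesis unfolding sum_eq g_w g_p sym expand by simp
qed

lemma eigenfun_path_vec:
  assumes r: "r < n" and root: "char_minor x {} = 0"
  shows "eigenfun x (path_vec x r)"
  unfolding eigenfun_def
proof (intro allI impI)
  fix w assume w: "w < n"
  consider "\<not> has_path A r w" | "w = r" | "has_path A r w" "w \<noteq> r" by blast
  then show "(\<Sum>z\<in>{0..<n}. A $$ (w, z) * path_vec x r z) = x * path_vec x r w"
  proof cases
    case 1
    then show ?thesis by (rule path_vec_eigen_unreachable[OF w])
  next
    case 2
    then show ?thesis using path_vec_eigen_root[OF r root] by simp
  next
    case 3
    then show ?thesis by (rule path_vec_eigen_descendant)
  qed
qed

lemma eigenfun_lincomb:
  assumes "eigenfun x f" "eigenfun x g"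
  shows "eigenfun x (\<lambda>z. a * f z + b * g z)"
proof -
  have "(\<Sum>z\<in>{0..<n}. A $$ (w, z) * (a * f z + b * g z)) =
      a * (\<Sum>z\<in>{0..<n}. A $$ (w, z) * f z) + b * (\<Sum>z\<in>{0..<n}. A $$ (w, z) * g z)" for w
    by (simp add: sum.distrib sum_distrib_left algebra_simps)
  then show ?thesis using assms unfolding eigenfun_def by (simp add: algebra_simps)
qed

lemma sum_char_mat_entry:
  assumes "i < n"
  shows "(\<Sum>j\<in>{0..<n}. char_mat_entry A x i j * f j) = x * f i - (\<Sum>j\<in>{0..<n}. A $$ (i, j) * f j)"
proof -
  have "(\<Sum>j\<in>{0..<n}. char_mat_entry A x i j * f j) =
      (\<Sum>j\<in>{0..<n}. (if i = j then x * f j else 0)) - (\<Sum>j\<in>{0..<n}. A $$ (i, j) * f j)"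
    unfolding char_mat_entry_def sum_subtractf[symmetric] by (rule sum.cong) (auto simp: left_diff_distrib)
  then show ?thesis using assms by simp
qed

text \<open>Replacing column \<open>u\<close> of \<open>xI - A\<close> by a unit vector yields a matrix with determinant
  \<open>\<Phi>({u}) \<noteq> 0\<close> that annihilates every eigenfunction vanishing at \<open>u\<close>.\<close>

lemma eigenfun_eq_0:
  assumes u: "u < n" and nz: "char_minor x {u} \<noteq> 0" and f: "eigenfun x f" and fu: "f u = 0"
    and v: "v < n"
  shows "f v = 0"
proof -
  define G where "G = (\<lambda>i j. if j = u then (if i = u then 1 else 0) else char_mat_entry A x i j)"
  define M where "M = mat n n (\<lambda>(i, j). G i j)"
  have M: "M \<in> carrier_mat n n" unfolding M_def by simp
  have "det M = det_on G {0..<n}"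
    unfolding det_eq_det_on[OF M] by (rule det_on_cong) (simp add: M_def)
  also have "\<dots> = G u u * det_on G ({0..<n} - {u})"
    by (rule det_on_zero_column) (use u in \<open>auto simp: G_def\<close>)
  also have "det_on G ({0..<n} - {u}) = char_minor x {u}"
    unfolding char_minor_def by (rule det_on_cong) (simp add: G_def)
  finally have "det M \<noteq> 0" using nz by (simp add: G_def)
  moreover have "M *\<^sub>v vec n f = 0\<^sub>v n"
  proof (rule eq_vecI)
    fix i assume "i < dim_vec (0\<^sub>v n :: real vec)"
    then have i: "i < n" by simp
    have "(M *\<^sub>v vec n f) $ i = (\<Sum>j\<in>{0..<n}. G i j * f j)"
      using i unfolding M_def by (simp add: mult_mat_vec_def scalar_prod_def row_def)
    also have "\<dots> = (\<Sum>j\<in>{0..<n}. char_mat_entry A x i j * f j)"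
      by (rule sum.cong[OF refl]) (simp add: G_def fu)
    also have "\<dots> = 0" using sum_char_mat_entry[OF i] f i unfolding eigenfun_def by simp
    finally show "(M *\<^sub>v vec n f) $ i = (0\<^sub>v n :: real vec) $ i" using i by simp
  qed (simp add: M_def)
  ultimately have "vec n f = 0\<^sub>v n" using det_0_iff_vec_prod_zero[OF M] by force
  then show ?thesis using v by (metis index_vec index_zero_vec(1))
qed

lemma eigenvector_vec:
  assumes f: "eigenfun x f" and v: "v < n" "f v \<noteq> 0"
  shows "eigenvector A (vec n f) x"
proof -
  have "vec n f \<noteq> 0\<^sub>v n" using v by (metis index_vec index_zero_vec(1))
  moreover have "A *\<^sub>v vec n f = x \<cdot>\<^sub>v vec n f"
  proof (rule eq_vecI)
    fix i assume "i < dim_vec (x \<cdot>\<^sub>v vec n f)"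
    then have i: "i < n" by simp
    have "(A *\<^sub>v vec n f) $ i = (\<Sum>j\<in>{0..<n}. A $$ (i, j) * f j)"
      using i dim_A by (simp add: mult_mat_vec_def scalar_prod_def row_def)
    then show "(A *\<^sub>v vec n f) $ i = (x \<cdot>\<^sub>v vec n f) $ i" using f i unfolding eigenfun_def by simp
  qed (simp add: dim_A)
  ultimately show ?thesis unfolding eigenvector_def using dim_A by simp
qed

text \<open>\<open>g\<^sub>v - (g\<^sub>v(u) / g\<^sub>u(u)) g\<^sub>u\<close> is an eigenfunction vanishing at \<open>u\<close>, hence zero; evaluating it at
  \<open>v\<close> with \<open>g\<^sub>v(u) = g\<^sub>u(v)\<close> gives the identity.\<close>

lemma path_vec_square:
  assumes root: "char_minor x {} = 0" and u: "u < n" and nz: "char_minor x {u} \<noteq> 0"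
    and v: "v < n"
  shows "(path_vec x u v)\<^sup>2 = char_minor x {u} * char_minor x {v}"
proof -
  have fu: "path_vec x u u = char_minor x {u}" by (rule path_vec_self[OF u])
  define c where "c = path_vec x v u / path_vec x u u"
  define y where "y = (\<lambda>z. 1 * path_vec x v z + (- c) * path_vec x u z)"
  have "eigenfun x y" unfolding y_def by (intro eigenfun_lincomb eigenfun_path_vec root u v)
  moreover have "y u = 0" using fu nz unfolding y_def c_def by simp
  ultimately have "y v = 0" using eigenfun_eq_0[OF u nz _ _ v] by blast
  then have "char_minor x {v} = path_vec x u v / path_vec x u u * path_vec x u v"
    using path_vec_self[OF v] path_vec_sym[of x v u] unfolding y_def c_def by simp
  then show ?thesis using fu nz by (simp add: field_simps power2_eq_square)
qed

lemma sum_path_vec_square: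
  assumes root: "char_minor x {} = 0" and u: "u < n" and nz: "char_minor x {u} \<noteq> 0"
  shows "(\<Sum>v<n. (path_vec x u v)\<^sup>2) = char_minor x {u} * (\<Sum>v<n. char_minor x {v})"
  using path_vec_square[OF root u nz] by (simp add: sum_distrib_left)

lemma unit_eigenvector_path_vec:
  assumes root: "char_minor x {} = 0" and u: "u < n" and nz: "char_minor x {u} \<noteq> 0"
  defines "t \<equiv> char_minor x {u} * (\<Sum>v<n. char_minor x {v})"
  shows "eigenvector A (vec n (\<lambda>v. path_vec x u v / sqrt t)) x"
    and "vec n (\<lambda>v. path_vec x u v / sqrt t) \<bullet> vec n (\<lambda>v. path_vec x u v / sqrt t) = 1"
proof -
  have sq: "(\<Sum>v<n. (path_vec x u v)\<^sup>2) = t" unfolding t_def by (rule sum_path_vec_square[OF root u nz])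
  have "0 < (path_vec x u u)\<^sup>2" using path_vec_self[OF u] nz by simp
  also have "(path_vec x u u)\<^sup>2 \<le> (\<Sum>v<n. (path_vec x u v)\<^sup>2)" by (rule member_le_sum) (use u in auto)
  finally have t: "0 < t" using sq by simp
  have f: "eigenfun x (path_vec x u)" by (rule eigenfun_path_vec[OF u root])
  have "eigenfun x (\<lambda>v. path_vec x u v / sqrt t)"
    using eigenfun_lincomb[OF f f, of "1 / sqrt t" 0] by simp
  then show "eigenvector A (vec n (\<lambda>v. path_vec x u v / sqrt t)) x"
    by (rule eigenvector_vec[OF _ u]) (use path_vec_self[OF u] nz t in simp)
  have "vec n (\<lambda>v. path_vec x u v / sqrt t) \<bullet> vec n (\<lambda>v. path_vec x u v / sqrt t) =
      (\<Sum>v<n. (path_vec x u v / sqrt t)\<^sup>2)"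
    unfolding scalar_prod_def atLeast0LessThan by (simp add: power2_eq_square)
  also have "\<dots> = (\<Sum>v<n. (path_vec x u v)\<^sup>2) / t"
    unfolding sum_divide_distrib power_divide using t by simp
  finally show "vec n (\<lambda>v. path_vec x u v / sqrt t) \<bullet> vec n (\<lambda>v. path_vec x u v / sqrt t) = 1"
    using sq t by simp
qed

lemma eigenvector_abs_sqrt_char_minor:
  assumes root: "char_minor x {} = 0" and u: "u < n" and nz: "char_minor x {u} \<noteq> 0"
  defines "s \<equiv> sqrt \<bar>char_minor x {u}\<bar>"
  shows "eigenvector A (vec n (\<lambda>v. path_vec x u v / s)) x"
    and "\<forall>v<n. \<bar>vec n (\<lambda>v. path_vec x u v / s) $ v\<bar> = sqrt \<bar>char_minor x {v}\<bar>"
proof -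
  have s: "0 < s" unfolding s_def using nz by simp
  have f: "eigenfun x (path_vec x u)" by (rule eigenfun_path_vec[OF u root])
  have "eigenfun x (\<lambda>v. path_vec x u v / s)"
    using eigenfun_lincomb[OF f f, of "1 / s" 0] by simp
  then show "eigenvector A (vec n (\<lambda>v. path_vec x u v / s)) x"
    by (rule eigenvector_vec[OF _ u]) (use path_vec_self[OF u] nz s in simp)
  show "\<forall>v<n. \<bar>vec n (\<lambda>v. path_vec x u v / s) $ v\<bar> = sqrt \<bar>char_minor x {v}\<bar>"
  proof (intro allI impI)
    fix v assume v: "v < n"
    have sq: "(path_vec x u v)\<^sup>2 = char_minor x {u} * char_minor x {v}"
      by (rule path_vec_square[OF root u nz v])
    have "\<bar>path_vec x u v\<bar> = sqrt ((path_vec x u v)\<^sup>2)" by simp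
    also have "\<dots> = sqrt \<bar>char_minor x {u} * char_minor x {v}\<bar>"
      unfolding sq[symmetric] by simp
    also have "\<dots> = s * sqrt \<bar>char_minor x {v}\<bar>" unfolding s_def abs_mult by (rule real_sqrt_mult)
    finally show "\<bar>vec n (\<lambda>v. path_vec x u v / s) $ v\<bar> = sqrt \<bar>char_minor x {v}\<bar>"
      using v s by (simp add: abs_divide)
  qed
qed

end

text \<open>The multiplicity hypothesis is used only to know that \<open>\<lambda>\<close> is an eigenvalue: simplicity
  already follows from \<open>\<phi>(A - u, \<lambda>) \<noteq> 0\<close>.\<close>

theorem theorem3p3:
  fixes A :: "real mat" and n u :: nat and lam :: real
  assumes "A \<in> carrier_mat n n"
    and "\<forall>i < n. \<forall>j < n. A $$ (i, j) = A $$ (j, i)"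
    and "acyclic_mat A"
    and "order lam (char_poly A) = 1"
    and "u < n"
    and "phi (del_mat A {u}) lam \<noteq> 0"
  shows "\<exists>\<beta> \<gamma>. eigenvector A \<beta> lam \<and> \<beta> \<bullet> \<beta> = 1 \<and> eigenvector A \<gamma> lam \<and>
    (\<forall>v < n. \<beta> $ v =
       (if has_path A u v
        then path_weight A (upath A u v) * phi (del_mat A (set (upath A u v))) lam
             / sqrt (phi (del_mat A {u}) lam * phi' A lam)
        else 0)) \<and>
    (\<forall>v < n. \<bar>\<gamma> $ v\<bar> = sqrt \<bar>phi (del_mat A {v}) lam\<bar>)"
proof -
  interpret forest A n using assms(1-3) by unfold_locales
  have root: "char_minor lam {} = 0"
    using assms(4) order_root[of "char_poly A" lam] poly_char_poly_eq_char_minor by simp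
  have nz: "char_minor lam {u} \<noteq> 0" using assms(6) phi_del_mat_eq_char_minor[of "{u}"] by simp
  note \<beta> = unit_eigenvector_path_vec[OF root assms(5) nz]
  note \<gamma> = eigenvector_abs_sqrt_char_minor[OF root assms(5) nz]
  have "\<forall>v < n. vec n (\<lambda>v. path_vec lam u v / sqrt (char_minor lam {u} * (\<Sum>v<n. char_minor lam {v}))) $ v =
       (if has_path A u v
        then path_weight A (upath A u v) * phi (del_mat A (set (upath A u v))) lam
             / sqrt (phi (del_mat A {u}) lam * phi' A lam)
        else 0)"
    by (simp add: path_vec_def phi_del_mat_eq_char_minor phi'_eq_sum_char_minor)
  moreover have "\<forall>v<n. \<bar>vec n (\<lambda>v. path_vec lam u v / sqrt \<bar>char_minor lam {u}\<bar>) $ v\<bar> =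
      sqrt \<bar>phi (del_mat A {v}) lam\<bar>"
    using \<gamma>(2) phi_del_mat_eq_char_minor by simp
  ultimately show ?thesis using \<beta> \<gamma>(1) by blast
qed

end
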